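(* Let $X$ be an infinite-dimensional complex Banach space and let $A\in\mathcal{B}(X)$ be nonzero. Then the following are equivalent: (i) $A$ has rank one. (ii) $\dim K(TA+AT)\le 2$ for every $T\in\mathcal{B}(X)$.
   Context: $\mathcal{B}(X)$ denotes the algebra of all bounded linear operators on $X$. For $T\in\mathcal{B}(X)$, the analytic core $K(T)$ is the set of all $x\in X$ for which there exist $\delta>0$ and a sequence $(x_n)_{n\ge 0}\subset X$ with $x_0=x$, $Tx_{n+1}=x_n$ and $\|x_n\|\le \delta^n\|x\|$ for all $n\ge 0$. *)

theory Defs
  imports "HOL-Analysis.Analysis"
begin

class complex_vector = real_vector +
  fixes scaleC :: "complex \<Rightarrow> 'a \<Rightarrow> 'a" (infixr "*\<^sub>C" 75)
  assumes scaleC_add_right: "a *\<^sub>C (x + y) = a *\<^sub>C x + a *\<^sub>C y"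
    and scaleC_add_left: "(a + b) *\<^sub>C x = a *\<^sub>C x + b *\<^sub>C x"
    and scaleC_scaleC: "a *\<^sub>C (b *\<^sub>C x) = (a * b) *\<^sub>C x"
    and scaleC_one: "1 *\<^sub>C x = x"
    and scaleR_scaleC: "r *\<^sub>R x = complex_of_real r *\<^sub>C x"

class complex_normed_vector = complex_vector + real_normed_vector +
  assumes norm_scaleC: "norm (a *\<^sub>C x) = cmod a * norm x"

lemma complex_vector_space: "vector_space ((*\<^sub>C) :: complex \<Rightarrow> 'a::complex_vector \<Rightarrow> 'a)"
  by unfold_locales (simp_all add: scaleC_add_right scaleC_add_left scaleC_scaleC scaleC_one)

abbreviation cspan :: "'a::complex_vector set \<Rightarrow> 'a set" where
  "cspan \<equiv> module.span (*\<^sub>C)"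

abbreviation cdim :: "'a::complex_vector set \<Rightarrow> nat" where
  "cdim \<equiv> vector_space.dim (*\<^sub>C)"

definition cfinite_dim :: "'a::complex_vector set \<Rightarrow> bool" where
  "cfinite_dim V \<longleftrightarrow> (\<exists>B. finite B \<and> V \<subseteq> cspan B)"

definition bounded_clinear :: "('a::complex_normed_vector \<Rightarrow> 'b::complex_normed_vector) \<Rightarrow> bool" where
  "bounded_clinear T \<longleftrightarrow> bounded_linear T \<and> (\<forall>c x. T (c *\<^sub>C x) = c *\<^sub>C T x)"

definition rank_one :: "('a::complex_vector \<Rightarrow> 'b::complex_vector) \<Rightarrow> bool" where
  "rank_one A \<longleftrightarrow> cfinite_dim (range A) \<and> cdim (range A) = 1"

definition analytic_core :: "('a::real_normed_vector \<Rightarrow> 'a) \<Rightarrow> 'a set" where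
  "analytic_core T = {x. \<exists>\<delta>>0. \<exists>xs :: nat \<Rightarrow> 'a. xs 0 = x \<and> (\<forall>n. T (xs (Suc n)) = xs n)
       \<and> (\<forall>n. norm (xs n) \<le> \<delta> ^ n * norm x)}"

end

theory Submission
  imports Defs
begin

text \<open>
  If \<open>A\<close> has rank one, say \<open>range A \<subseteq> span {u}\<close>, then \<open>TA + AT\<close> has range in \<open>span {u, Tu}\<close>,
  and the analytic core of any operator lies in its range.

  Conversely, if \<open>A\<close> has rank at least two, we build a bounded \<open>T\<close> for which \<open>S = TA + AT\<close> has three
  independent vectors in \<open>K(S)\<close>: eigenvectors for nonzero eigenvalues, or a Jordan chain of length
  two for the eigenvalue 1, all of which lie in the analytic core.  The operator \<open>T\<close> is prescribed on
  finitely many independent vectors, which the Hahn--Banach theorem allows.  Three situations are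
  distinguished: \<open>ker A\<close> is infinite-dimensional; \<open>A x\<close> can be chosen outside \<open>span {x}\<close> modulo any
  finite-dimensional subspace; or, modulo some finite-dimensional subspace \<open>D\<close>, every \<open>A x\<close> is a
  multiple of \<open>x\<close>, and then infinite dimensionality of \<open>X\<close> produces the eigenvectors.
\<close>

interpretation cv: vector_space "scaleC :: complex \<Rightarrow> 'a \<Rightarrow> 'a::complex_vector"
  by (rule complex_vector_space)

interpretation cvp: vector_space_pair "scaleC :: complex \<Rightarrow> 'a \<Rightarrow> 'a::complex_vector"
  "scaleC :: complex \<Rightarrow> 'b \<Rightarrow> 'b::complex_vector"
  by unfold_locales

abbreviation clinear :: "('a::complex_vector \<Rightarrow> 'b::complex_vector) \<Rightarrow> bool" where
  "clinear \<equiv> Vector_Spaces.linear (*\<^sub>C) (*\<^sub>C)"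

lemma scaleC_of_real: "complex_of_real r *\<^sub>C x = r *\<^sub>R x"
  by (simp add: scaleR_scaleC)

section \<open>The Hahn--Banach theorem for the norm\<close>

text \<open>Partial real functionals are represented by their graphs, subspaces of \<open>X \<times> \<real>\<close>.\<close>

definition norm_dominated :: "('a::real_normed_vector \<times> real) set \<Rightarrow> bool" where
  "norm_dominated G \<longleftrightarrow> (\<forall>(x, d) \<in> G. d \<le> norm x)"

lemma norm_dominatedD: "norm_dominated G \<Longrightarrow> (x, d) \<in> G \<Longrightarrow> d \<le> norm x"
  by (auto simp: norm_dominated_def)

lemma subspace_Union_chain:
  assumes "\<C> \<noteq> {}" "\<And>X. X \<in> \<C> \<Longrightarrow> subspace X"
    and "\<And>X Y. X \<in> \<C> \<Longrightarrow> Y \<in> \<C> \<Longrightarrow> X \<subseteq> Y \<or> Y \<subseteq> X"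
  shows "subspace (\<Union>\<C>)"
  unfolding subspace_def
proof (intro conjI ballI allI)
  show "0 \<in> \<Union>\<C>" using assms(1,2) subspace_0 by blast
next
  fix x y assume "x \<in> \<Union>\<C>" "y \<in> \<Union>\<C>"
  then obtain X Y where "X \<in> \<C>" "Y \<in> \<C>" "x \<in> X" "y \<in> Y" by blast
  then show "x + y \<in> \<Union>\<C>" using assms(2) assms(3)[of X Y] subspace_add by blast
next
  fix c x assume "x \<in> \<Union>\<C>"
  then show "c *\<^sub>R x \<in> \<Union>\<C>" using assms(2) subspace_scale by blast
qed

lemma norm_dominated_extension_value:
  assumes M: "subspace M" "norm_dominated M"
  obtains c where "\<And>u a. (u, a) \<in> M \<Longrightarrow> a - norm (u - y) \<le> c"
    and "\<And>v b. (v, b) \<in> M \<Longrightarrow> c \<le> norm (v + y) - b"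
proof -
  define L where "L = (\<lambda>(u, a). a - norm (u - y)) ` M"
  have L_le: "l \<le> norm (v + y) - b" if "l \<in> L" "(v, b) \<in> M" for l v b
  proof -
    obtain u a where ua: "(u, a) \<in> M" "l = a - norm (u - y)" using \<open>l \<in> L\<close> by (auto simp: L_def)
    have "(u + v, a + b) \<in> M" using ua(1) that(2) M(1) subspace_add by fastforce
    then have "a + b \<le> norm (u + v)" using M(2) by (rule norm_dominatedD[rotated])
    also have "\<dots> \<le> norm (u - y) + norm (v + y)"
      using norm_triangle_ineq[of "u - y" "v + y"] by simp
    finally show ?thesis using ua(2) by simp
  qed
  have "(0, 0) \<in> M" using subspace_0[OF M(1)] by (simp add: zero_prod_def)
  then have "L \<noteq> {}" "bdd_above L"
    using L_le by (auto simp: L_def intro!: bdd_aboveI[where M="norm (0 + y) - 0"])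
  show ?thesis
  proof
    show "a - norm (u - y) \<le> Sup L" if "(u, a) \<in> M" for u a
      using that \<open>bdd_above L\<close> by (intro cSup_upper) (force simp: L_def)
    show "Sup L \<le> norm (v + y) - b" if "(v, b) \<in> M" for v b
      using \<open>L \<noteq> {}\<close> L_le that by (intro cSup_least) auto
  qed
qed

lemma norm_dominated_span_insert:
  assumes M: "subspace M" "norm_dominated M"
    and lower: "\<And>u a. (u, a) \<in> M \<Longrightarrow> a - norm (u - y) \<le> c"
    and upper: "\<And>v b. (v, b) \<in> M \<Longrightarrow> c \<le> norm (v + y) - b"
  shows "norm_dominated (span (insert (y, c) M))"
  unfolding norm_dominated_def
proof (intro ballI, clarify)
  fix z d assume "(z, d) \<in> span (insert (y, c) M)"
  moreover have "span M = M" using M(1) span_eq_iff by blast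
  ultimately obtain k where "(z, d) - k *\<^sub>R (y, c) \<in> M" by (auto simp: span_insert)
  then have zd: "(z - k *\<^sub>R y, d - k * c) \<in> M" by simp
  have scaled: "(t *\<^sub>R (z - k *\<^sub>R y), t * (d - k * c)) \<in> M" for t
    using subspace_scale[OF M(1) zd, of t] by simp
  consider "k = 0" | "k > 0" | "k < 0" by linarith
  then show "d \<le> norm z"
  proof cases
    case 1
    then show ?thesis using norm_dominatedD[OF M(2) zd] by simp
  next
    case 2
    have "inverse k *\<^sub>R (z - k *\<^sub>R y) = inverse k *\<^sub>R z - y"
      "inverse k * (d - k * c) = d / k - c" using 2 by (auto simp: algebra_simps field_simps)
    with upper[OF scaled[of "inverse k"]] have "d / k \<le> norm z / k"
      using 2 by (simp add: divide_inverse mult.commute)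
    then show ?thesis using 2 by (simp add: divide_le_cancel)
  next
    case 3
    have "inverse (- k) *\<^sub>R (z - k *\<^sub>R y) = inverse (- k) *\<^sub>R z + y"
      "inverse (- k) * (d - k * c) = d / (- k) + c" using 3 by (auto simp: algebra_simps field_simps)
    with lower[OF scaled[of "inverse (- k)"]] have "d / (- k) \<le> norm z / (- k)"
      using 3 by (simp add: divide_inverse mult.commute)
    then show ?thesis using 3 by (simp add: divide_le_cancel)
  qed
qed

lemma maximal_norm_dominated_subspace:
  fixes x0 :: "'a::real_normed_vector"
  obtains M where "subspace M" "norm_dominated M" "(x0, norm x0) \<in> M"
    and "\<And>G. subspace G \<Longrightarrow> norm_dominated G \<Longrightarrow> M \<subseteq> G \<Longrightarrow> G = M"
proof -
  define P where "P = {G. subspace G \<and> norm_dominated G \<and> (x0, norm x0) \<in> G}"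
  have "norm_dominated (span {(x0, norm x0)})"
    by (auto simp: norm_dominated_def span_singleton abs_ge_self mult_right_mono)
  then have "span {(x0, norm x0)} \<in> P" by (simp add: P_def span_base)
  moreover have "\<Union>\<C> \<in> P" if "\<C> \<noteq> {}" "subset.chain P \<C>" for \<C>
    using that subspace_Union_chain[of \<C>]
    by (auto simp: P_def subset_chain_def norm_dominated_def)
  ultimately have "\<exists>M\<in>P. \<forall>G\<in>P. M \<subseteq> G \<longrightarrow> G = M"
    by (intro subset_Zorn_nonempty) auto
  then obtain M where "M \<in> P" "\<And>G. G \<in> P \<Longrightarrow> M \<subseteq> G \<Longrightarrow> G = M" by blast
  then show ?thesis by (intro that[of M]) (auto simp: P_def)
qed

lemma norming_functional_exists:
  fixes x0 :: "'a::real_normed_vector"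
  obtains U where "bounded_linear U" "U x0 = norm x0" "\<And>x. \<bar>U x\<bar> \<le> norm x"
proof -
  obtain M where M: "subspace M" "norm_dominated M" "(x0, norm x0) \<in> M"
    and maximal: "\<And>G. subspace G \<Longrightarrow> norm_dominated G \<Longrightarrow> M \<subseteq> G \<Longrightarrow> G = M"
    using maximal_norm_dominated_subspace by blast
  have total: "\<exists>c. (y, c) \<in> M" for y
  proof -
    obtain c where "\<And>u a. (u, a) \<in> M \<Longrightarrow> a - norm (u - y) \<le> c"
      "\<And>v b. (v, b) \<in> M \<Longrightarrow> c \<le> norm (v + y) - b"
      using norm_dominated_extension_value[OF M(1,2)] by blast
    then have "norm_dominated (span (insert (y, c) M))"
      by (rule norm_dominated_span_insert[OF M(1,2)])
    moreover have "M \<subseteq> span (insert (y, c) M)" by (meson span_superset subset_insertI subset_trans)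
    ultimately have "span (insert (y, c) M) = M" by (intro maximal) auto
    then show ?thesis using span_base[of "(y, c)" "insert (y, c) M"] by auto
  qed
  have unique: "a = b" if "(y, a) \<in> M" "(y, b) \<in> M" for y a b
  proof -
    have "(0, a - b) \<in> M" "(0, b - a) \<in> M"
      using subspace_diff[OF M(1) that] subspace_diff[OF M(1) that(2,1)] by auto
    then have "a - b \<le> norm (0::'a)" "b - a \<le> norm (0::'a)"
      using norm_dominatedD[OF M(2), of 0] by blast+
    then show ?thesis by simp
  qed
  define U where "U y = (THE c. (y, c) \<in> M)" for y
  have graph: "(y, U y) \<in> M" for y
    unfolding U_def using total[of y] unique by (metis theI)
  have add: "U (x + y) = U x + U y" for x y
    using unique[OF graph[of "x + y"]] subspace_add[OF M(1) graph[of x] graph[of y]] by simp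
  have scale: "U (r *\<^sub>R x) = r * U x" for r x
    using unique[OF graph[of "r *\<^sub>R x"]] subspace_scale[OF M(1) graph[of x], of r] by simp
  have le: "U x \<le> norm x" for x using norm_dominatedD[OF M(2) graph[of x]] .
  have abs_le: "\<bar>U x\<bar> \<le> norm x" for x
    using le[of x] le[of "- x"] scale[of "-1" x] by simp
  have "bounded_linear U"
    by (rule bounded_linear_intro[where K=1]) (use add scale abs_le in auto)
  moreover have "U x0 = norm x0" using unique[OF graph M(3)] .
  ultimately show ?thesis using that abs_le by blast
qed

section \<open>Bounded complex functionals and operators\<close>

definition bounded_cfunctional :: "('a::complex_normed_vector \<Rightarrow> complex) \<Rightarrow> bool" where
  "bounded_cfunctional F \<longleftrightarrow> bounded_linear F \<and> (\<forall>c x. F (c *\<^sub>C x) = c * F x)"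

lemma bounded_cfunctional_module_hom:
  "bounded_cfunctional F \<Longrightarrow> module_hom (*\<^sub>C) (*) F"
  unfolding bounded_cfunctional_def module_hom_def module_hom_axioms_def
  using vector_space_over_itself.module_axioms cv.module_axioms
  by (auto simp: bounded_linear.linear linear_add)

lemma bounded_cfunctional_diff_mult:
  "bounded_cfunctional F \<Longrightarrow> bounded_cfunctional G \<Longrightarrow> bounded_cfunctional (\<lambda>x. F x - c * G x)"
  unfolding bounded_cfunctional_def
  by (auto intro!: bounded_linear_sub bounded_linear_const_mult simp: algebra_simps)

lemma bounded_cfunctional_eq_0_on_span:
  assumes "bounded_cfunctional F" "\<And>b. b \<in> B \<Longrightarrow> F b = 0" "x \<in> cspan B"
  shows "F x = 0"
proof -
  interpret module_hom "(*\<^sub>C)" "(*)" F by (rule bounded_cfunctional_module_hom[OF assms(1)])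
  show ?thesis using eq_0_on_span assms(2,3) by blast
qed

lemma bounded_cfunctional_complexification:
  fixes U :: "'a::complex_normed_vector \<Rightarrow> real"
  assumes "bounded_linear U"
  shows "bounded_cfunctional (\<lambda>x. complex_of_real (U x) - \<i> * complex_of_real (U (\<i> *\<^sub>C x)))"
proof -
  interpret U: bounded_linear U by fact
  define G where "G = (\<lambda>x. complex_of_real (U x) - \<i> * complex_of_real (U (\<i> *\<^sub>C x)))"
  obtain K where K: "\<And>x. norm (U x) \<le> norm x * K" using U.bounded by blast
  have G_scaleC: "G (c *\<^sub>C x) = c * G x" for c x
  proof -
    obtain a b where c: "c = complex_of_real a + complex_of_real b * \<i>"
      by (metis complex_eq mult.commute)
    have "c *\<^sub>C x = a *\<^sub>R x + b *\<^sub>R (\<i> *\<^sub>C x)"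
      by (simp only: c scaleC_add_left flip: scaleC_scaleC scaleC_of_real)
    moreover have "\<i> *\<^sub>C (c *\<^sub>C x) = (complex_of_real (- b) + complex_of_real a * \<i>) *\<^sub>C x"
      by (simp add: scaleC_scaleC c algebra_simps)
    then have "\<i> *\<^sub>C (c *\<^sub>C x) = (- b) *\<^sub>R x + a *\<^sub>R (\<i> *\<^sub>C x)"
      by (simp only: scaleC_add_left flip: scaleC_scaleC scaleC_of_real)
    ultimately have "G (c *\<^sub>C x) = complex_of_real (U (a *\<^sub>R x + b *\<^sub>R (\<i> *\<^sub>C x)))
       - \<i> * complex_of_real (U ((- b) *\<^sub>R x + a *\<^sub>R (\<i> *\<^sub>C x)))"
      by (simp only: G_def)
    also have "\<dots> = c * G x"
      unfolding U.add U.scale G_def c by (simp add: algebra_simps)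
    finally show ?thesis .
  qed
  have "norm (G x) \<le> norm x * (2 * K)" for x
  proof -
    have "norm (G x) \<le> \<bar>U x\<bar> + \<bar>U (\<i> *\<^sub>C x)\<bar>"
      unfolding G_def
      using norm_triangle_ineq4[of "complex_of_real (U x)" "\<i> * complex_of_real (U (\<i> *\<^sub>C x))"]
      by (simp add: norm_mult)
    also have "\<dots> \<le> norm x * K + norm (\<i> *\<^sub>C x) * K" using K by (intro add_mono) auto
    finally show ?thesis by (simp add: norm_scaleC mult_ac)
  qed
  moreover have "G (r *\<^sub>R x) = r *\<^sub>R G x" for r x
    using G_scaleC[of "complex_of_real r" x] by (simp add: scaleC_of_real scaleR_conv_of_real)
  moreover have "G (x + y) = G x + G y" for x y
    by (simp add: G_def scaleC_add_right U.add algebra_simps)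
  ultimately have "bounded_linear G" by (intro bounded_linear_intro[where K="2 * K"])
  then show ?thesis using G_scaleC by (simp add: bounded_cfunctional_def G_def)
qed

lemma bounded_cfunctional_exists:
  fixes x0 :: "'a::complex_normed_vector"
  assumes "x0 \<noteq> 0"
  obtains F where "bounded_cfunctional F" "F x0 = 1"
proof -
  obtain U where U: "bounded_linear U" "U x0 = norm x0" "\<And>x. \<bar>U x\<bar> \<le> norm x"
    using norming_functional_exists[of x0] by blast
  define G where "G x = complex_of_real (U x) - \<i> * complex_of_real (U (\<i> *\<^sub>C x))" for x
  have G: "bounded_cfunctional G"
    unfolding G_def by (rule bounded_cfunctional_complexification[OF U(1)])
  have "Re (G x0) = norm x0" by (simp add: G_def U(2))
  then have "G x0 \<noteq> 0" using assms by auto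
  have "bounded_cfunctional (\<lambda>x. G x / G x0)"
    using G bounded_linear_compose[OF bounded_linear_divide, of G "G x0"]
    by (simp add: bounded_cfunctional_def o_def)
  then show ?thesis using that \<open>G x0 \<noteq> 0\<close> by simp
qed

lemma bounded_cfunctional_separation:
  fixes B :: "'a::complex_normed_vector set"
  assumes "finite B" "x0 \<notin> cspan B"
  shows "\<exists>F. bounded_cfunctional F \<and> (\<forall>b\<in>B. F b = 0) \<and> F x0 = 1"
  using assms
proof (induction B arbitrary: x0 rule: finite_induct)
  case empty
  then show ?case using bounded_cfunctional_exists[of x0] by auto
next
  case (insert b B)
  show ?case
  proof (cases "b \<in> cspan B")
    case True
    then have "x0 \<notin> cspan B" using insert.prems cv.span_redundant by metis
    then obtain F where F: "bounded_cfunctional F" "\<forall>b\<in>B. F b = 0" "F x0 = 1"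
      using insert.IH by blast
    moreover have "F b = 0" using bounded_cfunctional_eq_0_on_span F(1,2) True by blast
    ultimately show ?thesis by auto
  next
    case False
    obtain g where g: "bounded_cfunctional g" "\<forall>b\<in>B. g b = 0" "g b = 1"
      using insert.IH[OF False] by blast
    have "x0 - g x0 *\<^sub>C b \<notin> cspan B"
      using insert.prems cv.span_breakdown_eq by blast
    then obtain h where h: "bounded_cfunctional h" "\<forall>b\<in>B. h b = 0" "h (x0 - g x0 *\<^sub>C b) = 1"
      using insert.IH by blast
    interpret h: module_hom "(*\<^sub>C)" "(*)" h by (rule bounded_cfunctional_module_hom[OF h(1)])
    \<comment> \<open>correct \<open>h\<close> by a multiple of \<open>g\<close> so that it also vanishes at \<open>b\<close>\<close>
    have "bounded_cfunctional (\<lambda>x. h x - h b * g x)"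
      by (rule bounded_cfunctional_diff_mult[OF h(1) g(1)])
    moreover have "h x0 - h b * g x0 = 1" using h(3) by (simp add: h.diff h.scale mult.commute)
    ultimately show ?thesis using g h by auto
  qed
qed

lemma bounded_clinear_linear: "bounded_clinear A \<Longrightarrow> clinear A"
  unfolding bounded_clinear_def Vector_Spaces.linear_iff
  by (auto simp: complex_vector_space bounded_linear.linear linear_add)

lemma clinear_ops:
  assumes "clinear A"
  shows "A 0 = 0" "A (x + y) = A x + A y" "A (x - y) = A x - A y"
    "A (c *\<^sub>C x) = c *\<^sub>C A x" "A (r *\<^sub>R x) = r *\<^sub>R A x"
  using cvp.linear_0[OF assms] cvp.linear_add[OF assms] cvp.linear_diff[OF assms]
    cvp.linear_scale[OF assms] cvp.linear_scale[OF assms, of "complex_of_real r"]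
  by (simp_all add: scaleC_of_real)

lemmas bounded_clinear_ops = clinear_ops[OF bounded_clinear_linear]

lemma clinear_anticommutator:
  assumes "clinear T" "clinear A"
  shows "clinear (\<lambda>x. T (A x) + A (T x))"
  using cvp.linear_compose_add[OF Vector_Spaces.linear_compose[OF assms(2,1)]
      Vector_Spaces.linear_compose[OF assms(1,2)]]
  by (simp add: o_def)

lemma bounded_clinear_functional_times_vector:
  assumes "bounded_cfunctional F"
  shows "bounded_clinear (\<lambda>x. F x *\<^sub>C u)"
proof -
  interpret F: bounded_linear F using assms by (simp add: bounded_cfunctional_def)
  have F_scaleC: "F (c *\<^sub>C x) = c * F x" for c x
    using assms by (simp add: bounded_cfunctional_def)
  obtain K where K: "\<And>x. norm (F x) \<le> norm x * K" using F.bounded by blast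
  have "bounded_linear (\<lambda>x. F x *\<^sub>C u)"
  proof (rule bounded_linear_intro[where K="K * norm u"])
    show "F (x + y) *\<^sub>C u = F x *\<^sub>C u + F y *\<^sub>C u" for x y by (simp add: F.add scaleC_add_left)
    show "F (r *\<^sub>R x) *\<^sub>C u = r *\<^sub>R (F x *\<^sub>C u)" for r x
      by (simp add: scaleR_scaleC scaleC_scaleC F_scaleC)
    show "norm (F x *\<^sub>C u) \<le> norm x * (K * norm u)" for x
      using mult_right_mono[OF K[of x], of "norm u"] by (simp add: norm_scaleC mult.assoc)
  qed
  then show ?thesis by (simp add: bounded_clinear_def F_scaleC scaleC_scaleC)
qed

lemma bounded_clinear_sum:
  assumes "\<And>i. i \<in> I \<Longrightarrow> bounded_clinear (f i)"
  shows "bounded_clinear (\<lambda>x. \<Sum>i\<in>I. f i x)"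
  unfolding bounded_clinear_def
proof (intro conjI allI)
  show "bounded_linear (\<lambda>x. \<Sum>i\<in>I. f i x)"
    using assms unfolding bounded_clinear_def by (intro bounded_linear_sum) blast
  fix c x
  have "(\<Sum>i\<in>I. f i (c *\<^sub>C x)) = (\<Sum>i\<in>I. c *\<^sub>C f i x)"
    using assms by (intro sum.cong) (auto simp: bounded_clinear_def)
  also have "\<dots> = c *\<^sub>C (\<Sum>i\<in>I. f i x)" by (rule cv.scale_sum_right[symmetric])
  finally show "(\<Sum>i\<in>I. f i (c *\<^sub>C x)) = c *\<^sub>C (\<Sum>i\<in>I. f i x)" .
qed

lemma bounded_clinear_interpolation:
  fixes B :: "'a::complex_normed_vector set"
  assumes "finite B" "cv.independent B"
  shows "\<exists>T. bounded_clinear T \<and> (\<forall>b\<in>B. T b = g b) \<and> range T \<subseteq> cspan (g ` B)"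
proof -
  have "\<forall>b\<in>B. \<exists>F. bounded_cfunctional F \<and> (\<forall>b'\<in>B - {b}. F b' = 0) \<and> F b = 1"
    using assms bounded_cfunctional_separation[of "B - {b}" b for b]
    by (auto simp: cv.dependent_def)
  then obtain \<Phi> where \<Phi>: "\<And>b. b \<in> B \<Longrightarrow> bounded_cfunctional (\<Phi> b)"
    "\<And>b b'. b \<in> B \<Longrightarrow> b' \<in> B \<Longrightarrow> b' \<noteq> b \<Longrightarrow> \<Phi> b b' = 0" "\<And>b. b \<in> B \<Longrightarrow> \<Phi> b b = 1"
    by (metis DiffI singletonD)
  define T where "T x = (\<Sum>b\<in>B. \<Phi> b x *\<^sub>C g b)" for x
  have "bounded_clinear T"
    unfolding T_def by (intro bounded_clinear_sum bounded_clinear_functional_times_vector \<Phi>(1))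
  moreover have "T b' = g b'" if "b' \<in> B" for b'
  proof -
    have "T b' = (\<Sum>b\<in>B. if b = b' then g b else 0)"
      unfolding T_def by (rule sum.cong) (use \<Phi> that in auto)
    then show ?thesis using assms(1) that by simp
  qed
  moreover have "range T \<subseteq> cspan (g ` B)"
    unfolding T_def by (auto intro!: cv.span_sum cv.span_scale intro: cv.span_base)
  ultimately show ?thesis by blast
qed

lemma bounded_clinear_projection:
  fixes M G :: "'a::complex_normed_vector set"
  assumes "finite (M \<union> G)" "cv.independent (M \<union> G)" "M \<inter> G = {}"
  obtains T where "bounded_clinear T" "\<And>m. m \<in> M \<Longrightarrow> T m = m" "\<And>v. v \<in> cspan G \<Longrightarrow> T v = 0"
proof -
  obtain T where T: "bounded_clinear T" "\<forall>b\<in>M \<union> G. T b = (if b \<in> M then b else 0)"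
    using bounded_clinear_interpolation[OF assms(1,2), of "\<lambda>b. if b \<in> M then b else 0"] by blast
  have "T b = 0" if "b \<in> G" for b using T(2) assms(3) that by auto
  then have "T v = 0" if "v \<in> cspan G" for v
    using cvp.linear_eq_0_on_span[OF bounded_clinear_linear[OF T(1)]] that by blast
  then show ?thesis using that T by auto
qed

section \<open>The analytic core\<close>

lemma analytic_core_subset_range: "analytic_core S \<subseteq> range S"
proof
  fix x assume "x \<in> analytic_core S"
  then obtain xs where "xs 0 = x" "\<And>n. S (xs (Suc n)) = xs n"
    unfolding analytic_core_def by blast
  then show "x \<in> range S" by (metis rangeI)
qed

lemma eigenvector_in_analytic_core:
  fixes S :: "'a::complex_normed_vector \<Rightarrow> 'a"
  assumes "clinear S" "S v = l *\<^sub>C v" "l \<noteq> 0"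
  shows "v \<in> analytic_core S"
proof -
  define xs where "xs n = inverse l ^ n *\<^sub>C v" for n
  have "S (xs (Suc n)) = xs n" for n
    using assms by (simp add: xs_def clinear_ops scaleC_scaleC field_simps)
  moreover have "norm (xs n) \<le> cmod (inverse l) ^ n * norm v" for n
    by (simp add: xs_def norm_scaleC norm_power)
  moreover have "xs 0 = v" by (simp add: xs_def scaleC_one)
  ultimately show ?thesis
    using assms(3) unfolding analytic_core_def
    by (intro CollectI exI[of _ "cmod (inverse l)"] exI[of _ xs]) auto
qed

lemma fixed_point_in_analytic_core:
  fixes S :: "'a::complex_normed_vector \<Rightarrow> 'a"
  shows "clinear S \<Longrightarrow> S v = v \<Longrightarrow> v \<in> analytic_core S"
  using eigenvector_in_analytic_core[of S v 1] by (simp add: scaleC_one)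

text \<open>The preimages \<open>v - n w\<close> grow only linearly, hence slower than \<open>\<delta>\<^sup>n\<close> for any \<open>\<delta> > 1\<close>.\<close>

lemma jordan_vector_in_analytic_core:
  fixes S :: "'a::complex_normed_vector \<Rightarrow> 'a"
  assumes S: "clinear S" and w: "S w = w" and v: "S v = v + w" "v \<noteq> 0"
  shows "v \<in> analytic_core S"
proof -
  define xs where "xs n = v - real n *\<^sub>R w" for n
  define \<delta> where "\<delta> = 1 + norm w / norm v"
  have "S (xs (Suc n)) = xs n" for n
    by (simp add: xs_def clinear_ops[OF S] v w algebra_simps)
  moreover have "norm (xs n) \<le> \<delta> ^ n * norm v" for n
  proof -
    have "norm (xs n) \<le> norm v + real n * norm w"
      unfolding xs_def using norm_triangle_ineq4[of v "real n *\<^sub>R w"] by simp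
    also have "\<dots> = (1 + real n * (norm w / norm v)) * norm v" using v(2) by (simp add: field_simps)
    also have "\<dots> \<le> \<delta> ^ n * norm v"
      unfolding \<delta>_def
      by (intro mult_right_mono Bernoulli_inequality order_trans[OF _ divide_nonneg_nonneg]) auto
    finally show ?thesis .
  qed
  moreover have "\<delta> > 0" by (simp add: \<delta>_def add_pos_nonneg)
  moreover have "xs 0 = v" by (simp add: xs_def)
  ultimately show ?thesis unfolding analytic_core_def by blast
qed

lemma card_le_cdim:
  assumes "cfinite_dim V" "I \<subseteq> V" "cv.independent I"
  shows "card I \<le> cdim V"
proof -
  obtain E where E: "finite E" "V \<subseteq> cspan E" using assms(1) by (auto simp: cfinite_dim_def)
  obtain B where B: "B \<subseteq> V" "cv.independent B" "V \<subseteq> cspan B" "card B = cdim V"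
    by (rule cv.basis_exists)
  have "finite B" using cv.independent_span_bound[OF E(1) B(2)] B(1) E(2) by blast
  moreover have "I \<subseteq> cspan B" using assms(2) B(3) by blast
  ultimately have "card I \<le> card B" using cv.independent_span_bound[OF _ assms(3)] by blast
  then show ?thesis using B(4) by simp
qed

lemma independent_triple_not_cdim_le_two:
  assumes "{a, b, c} \<subseteq> V" "a \<noteq> 0" "b \<notin> cspan {a}" "c \<notin> cspan {a, b}"
  shows "\<not> (cfinite_dim V \<and> cdim V \<le> 2)"
proof
  assume V: "cfinite_dim V \<and> cdim V \<le> 2"
  have "{a, b} = {b, a}" by blast
  then have "cv.independent {c, b, a}"
    using assms(2-4) by (intro cv.independent_insertI cv.independent_empty) simp_all
  moreover have "b \<noteq> a" "c \<noteq> a" "c \<noteq> b"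
    using assms(3,4) cv.span_superset[of "{a}"] cv.span_superset[of "{a, b}"] by blast+
  then have "card {c, b, a} = 3" by simp
  moreover have "{c, b, a} \<subseteq> V" using assms(1) by blast
  ultimately show False using card_le_cdim[of V "{c, b, a}"] V by simp
qed

lemma notin_cspan_imp_notin: "x \<notin> cspan S \<Longrightarrow> x \<notin> S"
  using cv.span_base by blast

lemma add_notin_cspan:
  assumes "z \<notin> cspan E" "x \<in> cspan E" "F \<subseteq> cspan E"
  shows "z + x \<notin> cspan F"
proof
  assume "z + x \<in> cspan F"
  then have "z + x \<in> cspan E" using assms(3) cv.span_minimal[of F "cspan E"] by auto
  then show False using assms(1,2) cv.span_diff[of "z + x" E x] by auto
qed

lemma general_position_perturbation:
  assumes m: "m1 \<notin> cspan G" "m2 \<notin> cspan (insert m1 G)" "m3 \<notin> cspan (insert m2 (insert m1 G))"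
    and e: "e1 - m1 \<in> cspan G" "e2 - m2 \<in> cspan G" "e3 - m3 \<in> cspan G"
  shows "e1 \<noteq> 0" "e2 \<notin> cspan {e1}" "e3 \<notin> cspan {e1, e2}"
proof -
  have grow: "cspan G \<subseteq> cspan (insert m1 G)" "cspan (insert m1 G) \<subseteq> cspan (insert m2 (insert m1 G))"
    by (intro cv.span_mono subset_insertI)+
  have e1_span: "e1 \<in> cspan (insert m1 G)"
    using cv.span_add[OF cv.span_base[of m1 "insert m1 G"] subsetD[OF grow(1) e(1)]] by simp
  have e2_span: "e2 \<in> cspan (insert m2 (insert m1 G))"
    using cv.span_add[OF cv.span_base[of m2] subsetD[OF grow(2) subsetD[OF grow(1) e(2)]]] by simp
  show "e1 \<noteq> 0" using add_notin_cspan[OF m(1) e(1), of "{}"] by simp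
  show "e2 \<notin> cspan {e1}"
    using add_notin_cspan[OF m(2), of "e2 - m2" "{e1}"] e(2) grow e1_span by auto
  show "e3 \<notin> cspan {e1, e2}"
    using add_notin_cspan[OF m(3), of "e3 - m3" "{e1, e2}"] e(3) grow e1_span e2_span by auto
qed

lemma preimage_notin_cspan:
  assumes A: "clinear A" and ker: "\<not> cfinite_dim {z. A z = 0}" and E: "finite E"
  obtains p where "A p = A x" "p \<notin> cspan E"
proof -
  have "finite (insert x E)" using E by simp
  then obtain z where z: "z \<notin> cspan (insert x E)" "A z = 0"
    using ker unfolding cfinite_dim_def by blast
  have "x \<in> cspan (insert x E)" "E \<subseteq> cspan (insert x E)"
    using cv.span_superset[of "insert x E"] by auto
  then have "z + x \<notin> cspan E" using add_notin_cspan[OF z(1)] by blast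
  moreover have "A (z + x) = A x" using z(2) by (simp add: clinear_ops[OF A])
  ultimately show ?thesis using that by blast
qed

lemma cfinite_dim_preimage:
  assumes A: "clinear A" and ker: "cfinite_dim {z. A z = 0}" and V: "cfinite_dim V"
  shows "cfinite_dim {x. A x \<in> V}"
proof -
  obtain D where D: "finite D" "V \<subseteq> cspan D" using V by (auto simp: cfinite_dim_def)
  obtain E where E: "finite E" "{z. A z = 0} \<subseteq> cspan E" using ker by (auto simp: cfinite_dim_def)
  define N where "N = {x. A x \<in> cspan D}"
  obtain C where C: "C \<subseteq> A ` N" "cv.independent C" "A ` N \<subseteq> cspan C"
    using cv.maximal_independent_subset[of "A ` N"] by blast
  have "finite C" using C cv.independent_span_bound[OF D(1) C(2)] by (auto simp: N_def)
  obtain p where p: "\<And>c. c \<in> C \<Longrightarrow> A (p c) = c" using C(1) by (metis f_inv_into_f subsetD)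
  have "x \<in> cspan (E \<union> p ` C)" if "x \<in> N" for x
  proof -
    have "A ` p ` C = C" using p by force
    then have "A x \<in> A ` cspan (p ` C)"
      using that C(3) cvp.linear_span_image[OF A, of "p ` C"] by auto
    then obtain q where q: "q \<in> cspan (p ` C)" "A q = A x" by auto
    have "x - q \<in> cspan E" using E(2) q(2) by (auto simp: clinear_ops[OF A])
    then have "(x - q) + q \<in> cspan (E \<union> p ` C)"
      using q(1) cv.span_mono[of E "E \<union> p ` C"] cv.span_mono[of "p ` C" "E \<union> p ` C"]
      by (intro cv.span_add) auto
    then show ?thesis by simp
  qed
  then show ?thesis
    unfolding cfinite_dim_def using \<open>finite C\<close> E(1) D(2) by (auto simp: N_def intro!: exI[of _ "E \<union> p ` C"])
qed

lemma rank_one_iff_range_subset_cspan: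
  assumes "A \<noteq> (\<lambda>x. 0)"
  shows "rank_one A \<longleftrightarrow> (\<exists>u. range A \<subseteq> cspan {u})"
proof
  assume "rank_one A"
  obtain B where B: "B \<subseteq> range A" "cv.independent B" "range A \<subseteq> cspan B" "card B = cdim (range A)"
    by (rule cv.basis_exists)
  with \<open>rank_one A\<close> have "card B = 1" by (simp add: rank_one_def)
  then obtain u where "B = {u}" by (rule card_1_singletonE)
  then show "\<exists>u. range A \<subseteq> cspan {u}" using B(3) by blast
next
  assume "\<exists>u. range A \<subseteq> cspan {u}"
  then obtain u where u: "range A \<subseteq> cspan {u}" by blast
  obtain x1 where x1: "A x1 \<noteq> 0" using assms by auto
  have "A x1 \<in> cspan {u}" using u by auto
  then obtain c where "A x1 = c *\<^sub>C u" unfolding cv.span_singleton by blast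
  with x1 have "A x1 = c *\<^sub>C u" "c \<noteq> 0" by auto
  then have "u = inverse c *\<^sub>C A x1" by (simp add: scaleC_scaleC scaleC_one)
  then have "u \<in> cspan {A x1}" by (simp add: cv.span_base cv.span_scale)
  then have "range A \<subseteq> cspan {A x1}" using u cv.span_minimal[of "{u}" "cspan {A x1}"] by auto
  moreover have "cdim (range A) = 1"
    using x1 \<open>range A \<subseteq> cspan {A x1}\<close> by (intro cv.dim_unique[of "{A x1}"]) auto
  ultimately show "rank_one A" unfolding rank_one_def cfinite_dim_def by blast
qed

lemma analytic_core_anticommutator_rank_one:
  assumes T: "clinear T" and u: "range A \<subseteq> cspan {u}"
  shows "let K = analytic_core (\<lambda>x. T (A x) + A (T x)) in cfinite_dim K \<and> cdim K \<le> 2"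
proof -
  have "T (A x) + A (T x) \<in> cspan {u, T u}" for x
  proof -
    have "A x \<in> cspan {u}" "A (T x) \<in> cspan {u}" using u by blast+
    then obtain c c' where "A x = c *\<^sub>C u" "A (T x) = c' *\<^sub>C u" unfolding cv.span_singleton by blast
    then have "T (A x) + A (T x) = c *\<^sub>C T u + c' *\<^sub>C u" by (simp add: clinear_ops[OF T])
    moreover have "c *\<^sub>C T u + c' *\<^sub>C u \<in> cspan {u, T u}"
      by (intro cv.span_add cv.span_scale cv.span_base) auto
    ultimately show ?thesis by simp
  qed
  then have K: "analytic_core (\<lambda>x. T (A x) + A (T x)) \<subseteq> cspan {u, T u}"
    using analytic_core_subset_range[of "\<lambda>x. T (A x) + A (T x)"] by auto
  then have "cfinite_dim (analytic_core (\<lambda>x. T (A x) + A (T x)))"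
    unfolding cfinite_dim_def by (intro exI[of _ "{u, T u}"]) simp
  moreover have "cdim (analytic_core (\<lambda>x. T (A x) + A (T x))) \<le> card {u, T u}"
    by (rule cv.dim_le_card[OF K]) simp
  moreover have "card {u, T u} \<le> 2" by (simp add: card_insert_if)
  ultimately show ?thesis by simp
qed

section \<open>Operators of rank at least two\<close>

lemma anticommutator_eigenvector:
  fixes A T :: "'a::complex_normed_vector \<Rightarrow> 'a"
  assumes A: "clinear A" and T: "clinear T" and m: "T m = m" and a: "a \<noteq> 0"
    and r: "T (A m - a *\<^sub>C m) = 0" "T (A (A m - a *\<^sub>C m)) = 0"
  shows "m + inverse (2 * a) *\<^sub>C (A m - a *\<^sub>C m) \<in> analytic_core (\<lambda>x. T (A x) + A (T x))"
proof -
  define r where "r = A m - a *\<^sub>C m"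
  define S where "S = (\<lambda>x. T (A x) + A (T x))"
  have S: "clinear S" unfolding S_def by (rule clinear_anticommutator[OF T A])
  have Tr: "T r = 0" "T (A r) = 0" using r by (simp_all add: r_def)
  have "A m = a *\<^sub>C m + r" by (simp add: r_def)
  then have "S m = a *\<^sub>C m + a *\<^sub>C m + r" using m Tr by (simp add: S_def clinear_ops[OF T])
  then have Sm: "S m = (2 * a) *\<^sub>C m + r" by (metis mult_2 scaleC_add_left)
  have Sr: "S r = 0" using Tr by (simp add: S_def clinear_ops[OF A])
  have "S (m + inverse (2 * a) *\<^sub>C r) = (2 * a) *\<^sub>C (m + inverse (2 * a) *\<^sub>C r)"
    using a by (simp add: clinear_ops[OF S] Sm Sr scaleC_add_right scaleC_scaleC scaleC_one)
  then have "m + inverse (2 * a) *\<^sub>C r \<in> analytic_core S"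
    by (rule eigenvector_in_analytic_core[OF S]) (simp add: a)
  then show ?thesis by (simp add: S_def r_def)
qed

lemma core_not_le_two_if_kernel_infinite_dim:
  fixes A :: "'a::complex_normed_vector \<Rightarrow> 'a"
  assumes A: "bounded_clinear A" and ker: "\<not> cfinite_dim {z. A z = 0}"
    and x1: "A x1 \<noteq> 0" and x2: "A x2 \<notin> cspan {A x1}"
  shows "\<exists>T. bounded_clinear T \<and>
    \<not> (let K = analytic_core (\<lambda>x. T (A x) + A (T x)) in cfinite_dim K \<and> cdim K \<le> 2)"
proof -
  define u1 u2 where "u1 = A x1" and "u2 = A x2"
  obtain p1 where p1: "A p1 = u1" "p1 \<notin> cspan {u2, u1}"
    using preimage_notin_cspan[OF bounded_clinear_linear[OF A] ker, of "{u2, u1}" x1]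
    by (auto simp: u1_def)
  obtain p2 where p2: "A p2 = u2" "p2 \<notin> cspan {p1, u2, u1}"
    using preimage_notin_cspan[OF bounded_clinear_linear[OF A] ker, of "{p1, u2, u1}" x2]
    by (auto simp: u2_def)
  have distinct: "u2 \<notin> {u1}" "p1 \<notin> {u2, u1}" "p2 \<notin> {p1, u2, u1}"
    using x2 p1(2) p2(2) unfolding u1_def u2_def by (auto dest!: notin_cspan_imp_notin)
  define g where "g v = (if v = u1 then p1 else if v = u2 then p2 else 0)" for v
  define B where "B = {p2, p1, u2, u1}"
  have "cv.independent B"
    unfolding B_def using x1 x2 p1(2) p2(2)
    by (intro cv.independent_insertI cv.independent_empty) (auto simp: u1_def u2_def)
  then obtain T where T: "bounded_clinear T" "\<forall>b\<in>B. T b = g b"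
    and range_T: "range T \<subseteq> cspan (g ` B)"
    using bounded_clinear_interpolation[of B g] by (auto simp: B_def)
  have Tx: "T p1 = 0" "T p2 = 0" "T u1 = p1" "T u2 = p2"
    using T(2) distinct unfolding B_def g_def by auto
  define S where "S = (\<lambda>x. T (A x) + A (T x))"
  have S: "clinear S"
    unfolding S_def by (intro clinear_anticommutator bounded_clinear_linear T(1) A)
  have Sp: "S p1 = p1" "S p2 = p2" by (simp_all add: S_def Tx p1 p2 bounded_clinear_ops[OF A])
  have "S v = v" if "v \<in> g ` B" for v
    using that Sp clinear_ops(1)[OF S] by (auto simp: B_def g_def)
  then have "S w = w" if "w \<in> cspan (g ` B)" for w
    using cvp.linear_eq_on_span[OF S cv.linear_ident _ that] by auto
  then have "S (T (A u1)) = T (A u1)" using range_T by blast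
  moreover have "S u1 = u1 + T (A u1)" by (simp add: S_def Tx p1 add.commute)
  ultimately have "u1 \<in> analytic_core S"
    using jordan_vector_in_analytic_core[OF S] x1 by (auto simp: u1_def)
  moreover have "p1 \<in> analytic_core S" "p2 \<in> analytic_core S"
    using fixed_point_in_analytic_core[OF S] Sp by auto
  moreover have "p1 \<notin> cspan {u1}" "p2 \<notin> cspan {u1, p1}"
    using p1(2) p2(2) cv.span_mono[of "{u1}" "{u2, u1}"] cv.span_mono[of "{u1, p1}" "{p1, u2, u1}"]
    by auto
  ultimately have "\<not> (cfinite_dim (analytic_core S) \<and> cdim (analytic_core S) \<le> 2)"
    using x1 by (intro independent_triple_not_cdim_le_two) (auto simp: u1_def)
  then show ?thesis using T(1) unfolding S_def Let_def by blast
qed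

lemma core_not_le_two_if_moves_off_spans:
  fixes A :: "'a::complex_normed_vector \<Rightarrow> 'a"
  assumes A: "bounded_clinear A"
    and moves: "\<And>E. finite E \<Longrightarrow> \<exists>x. x \<notin> cspan E \<and> A x \<notin> cspan (insert x E)"
  shows "\<exists>T. bounded_clinear T \<and>
    \<not> (let K = analytic_core (\<lambda>x. T (A x) + A (T x)) in cfinite_dim K \<and> cdim K \<le> 2)"
proof -
  obtain x1 where h1: "x1 \<notin> cspan {}" "A x1 \<notin> cspan {x1}" using moves[of "{}"] by auto
  obtain x2 where h2: "x2 \<notin> cspan {A x1, x1}" "A x2 \<notin> cspan {x2, A x1, x1}"
    using moves[of "{A x1, x1}"] by auto
  obtain x3 where h3: "x3 \<notin> cspan {A x2, x2, A x1, x1}"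
    "A x3 \<notin> cspan {x3, A x2, x2, A x1, x1}"
    using moves[of "{A x2, x2, A x1, x1}"] by auto
  define B where "B = {A x3, x3, A x2, x2, A x1, x1}"
  have "cv.independent B" unfolding B_def
    by (intro cv.independent_insertI h1 h2 h3 cv.independent_empty)
  moreover have distinct: "A x1 \<notin> {x1}" "x2 \<notin> {A x1, x1}" "A x2 \<notin> {x2, A x1, x1}"
    "x3 \<notin> {A x2, x2, A x1, x1}" "A x3 \<notin> {x3, A x2, x2, A x1, x1}"
    using h1(2) h2 h3 by (auto dest!: notin_cspan_imp_notin)
  define g where "g v = (if v = A x1 then x1 else if v = A x2 then x2 else if v = A x3 then x3 else 0)"
    for v
  ultimately obtain T where T: "bounded_clinear T" "\<forall>b\<in>B. T b = g b"
    using bounded_clinear_interpolation[of B g] unfolding B_def by auto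
  have Tx: "T x1 = 0" "T x2 = 0" "T x3 = 0" "T (A x1) = x1" "T (A x2) = x2" "T (A x3) = x3"
    using T(2) distinct unfolding B_def g_def by auto
  define S where "S = (\<lambda>x. T (A x) + A (T x))"
  have S: "clinear S"
    unfolding S_def by (intro clinear_anticommutator bounded_clinear_linear T(1) A)
  have "x1 \<in> analytic_core S" "x2 \<in> analytic_core S" "x3 \<in> analytic_core S"
    using fixed_point_in_analytic_core[OF S] by (simp_all add: S_def Tx bounded_clinear_ops[OF A])
  moreover have "x2 \<notin> cspan {x1}" "x3 \<notin> cspan {x1, x2}"
    using h2(1) h3(1) cv.span_mono[of "{x1}" "{A x1, x1}"]
      cv.span_mono[of "{x1, x2}" "{A x2, x2, A x1, x1}"]
    by auto
  ultimately have "\<not> (cfinite_dim (analytic_core S) \<and> cdim (analytic_core S) \<le> 2)"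
    using h1(1) by (intro independent_triple_not_cdim_le_two) auto
  then show ?thesis using T(1) unfolding S_def Let_def by blast
qed

lemma core_not_le_two_if_scalar_modulo_finite:
  fixes A :: "'a::complex_normed_vector \<Rightarrow> 'a"
  assumes A: "bounded_clinear A" and inf: "\<not> cfinite_dim (UNIV :: 'a set)"
    and ker: "cfinite_dim {z. A z = 0}"
    and D: "finite D" "\<And>x. x \<notin> cspan D \<Longrightarrow> A x \<in> cspan (insert x D)"
  shows "\<exists>T. bounded_clinear T \<and>
    \<not> (let K = analytic_core (\<lambda>x. T (A x) + A (T x)) in cfinite_dim K \<and> cdim K \<le> 2)"
proof -
  obtain E0 where E0: "finite E0" "\<And>x. A x \<in> cspan D \<Longrightarrow> x \<in> cspan E0"
    using cfinite_dim_preimage[OF bounded_clinear_linear[OF A] ker, of "cspan D"] D(1)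
    unfolding cfinite_dim_def by blast
  obtain G where G: "G \<subseteq> D \<union> A ` D \<union> E0" "cv.independent G" "D \<union> A ` D \<union> E0 \<subseteq> cspan G"
    using cv.maximal_independent_subset by blast
  have "finite G" by (rule finite_subset[OF G(1)]) (use D(1) E0(1) in simp)
  have DG: "cspan D \<subseteq> cspan G" "cspan (A ` D) \<subseteq> cspan G" "cspan E0 \<subseteq> cspan G"
    using G(3) by (intro cv.span_minimal cv.subspace_span; blast)+
  have fresh: "\<exists>m. m \<notin> cspan H" if "finite H" for H :: "'a set"
    using inf that unfolding cfinite_dim_def by blast
  obtain m1 where m1: "m1 \<notin> cspan G" using fresh \<open>finite G\<close> by blast
  obtain m2 where m2: "m2 \<notin> cspan (insert m1 G)" using fresh[of "insert m1 G"] \<open>finite G\<close> by auto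
  obtain m3 where m3: "m3 \<notin> cspan (insert m2 (insert m1 G))"
    using fresh[of "insert m2 (insert m1 G)"] \<open>finite G\<close> by auto
  have "cv.independent (insert m3 (insert m2 (insert m1 G)))"
    using m1 m2 m3 G(2) by (intro cv.independent_insertI)
  moreover have "insert m3 (insert m2 (insert m1 G)) = {m1, m2, m3} \<union> G" by auto
  ultimately have "cv.independent ({m1, m2, m3} \<union> G)" by simp
  moreover have "finite ({m1, m2, m3} \<union> G)" using \<open>finite G\<close> by simp
  moreover have "{m1, m2, m3} \<inter> G = {}" using m1 m2 m3 by (auto dest!: notin_cspan_imp_notin)
  ultimately obtain T where T: "bounded_clinear T" "\<And>m. m \<in> {m1, m2, m3} \<Longrightarrow> T m = m"
    and TG: "\<And>v. v \<in> cspan G \<Longrightarrow> T v = 0"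
    using bounded_clinear_projection[of "{m1, m2, m3}" G] by blast
  define S where "S = (\<lambda>x. T (A x) + A (T x))"
  have near_eigenvector: "\<exists>e. e \<in> analytic_core S \<and> e - m \<in> cspan G"
    if m: "m \<notin> cspan G" "T m = m" for m
  proof -
    have "m \<notin> cspan D" using m(1) DG(1) by blast
    then obtain a where a: "A m - a *\<^sub>C m \<in> cspan D" using D(2) cv.span_breakdown_eq by blast
    have "a \<noteq> 0"
    proof
      assume "a = 0"
      then have "m \<in> cspan E0" using a E0(2) by simp
      then show False using m(1) DG(3) by blast
    qed
    moreover have "T (A m - a *\<^sub>C m) = 0" using TG DG(1) a by blast
    moreover have "A (A m - a *\<^sub>C m) \<in> cspan (A ` D)"
      using cvp.linear_span_image[OF bounded_clinear_linear[OF A]] a by blast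
    then have "T (A (A m - a *\<^sub>C m)) = 0" using TG DG(2) by blast
    ultimately have "m + inverse (2 * a) *\<^sub>C (A m - a *\<^sub>C m) \<in> analytic_core S"
      unfolding S_def
      by (intro anticommutator_eigenvector bounded_clinear_linear A T(1) m(2))
    moreover have "inverse (2 * a) *\<^sub>C (A m - a *\<^sub>C m) \<in> cspan G"
      using DG(1) a by (blast intro: cv.span_scale)
    ultimately show ?thesis by force
  qed
  have "m2 \<notin> cspan G" "m3 \<notin> cspan G"
    using m2 m3 cv.span_mono[of G "insert m1 G"] cv.span_mono[of G "insert m2 (insert m1 G)"] by auto
  then obtain e1 e2 e3 where e: "e1 \<in> analytic_core S" "e2 \<in> analytic_core S" "e3 \<in> analytic_core S"
    "e1 - m1 \<in> cspan G" "e2 - m2 \<in> cspan G" "e3 - m3 \<in> cspan G"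
    using near_eigenvector[of m1] near_eigenvector[of m2] near_eigenvector[of m3] m1 T(2)
    by blast
  then have "\<not> (cfinite_dim (analytic_core S) \<and> cdim (analytic_core S) \<le> 2)"
    using general_position_perturbation[OF m1 m2 m3 e(4-6)]
    by (intro independent_triple_not_cdim_le_two) auto
  then show ?thesis using T(1) unfolding S_def Let_def by blast
qed

lemma core_not_le_two_if_not_rank_one:
  fixes A :: "'a::complex_normed_vector \<Rightarrow> 'a"
  assumes A: "bounded_clinear A" and inf: "\<not> cfinite_dim (UNIV :: 'a set)"
    and "A \<noteq> (\<lambda>x. 0)" "\<not> rank_one A"
  shows "\<exists>T. bounded_clinear T \<and>
    \<not> (let K = analytic_core (\<lambda>x. T (A x) + A (T x)) in cfinite_dim K \<and> cdim K \<le> 2)"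
proof -
  obtain x1 where x1: "A x1 \<noteq> 0" using assms(3) by auto
  obtain x2 where x2: "A x2 \<notin> cspan {A x1}"
    using assms(4) rank_one_iff_range_subset_cspan[OF assms(3)] by blast
  show ?thesis
  proof (cases "cfinite_dim {z. A z = 0}")
    case False
    then show ?thesis using core_not_le_two_if_kernel_infinite_dim[OF A _ x1 x2] by blast
  next
    case ker: True
    show ?thesis
    proof (cases "\<forall>E. finite E \<longrightarrow> (\<exists>x. x \<notin> cspan E \<and> A x \<notin> cspan (insert x E))")
      case True
      then show ?thesis using core_not_le_two_if_moves_off_spans[OF A] by blast
    next
      case False
      then obtain D where "finite D" "\<And>x. x \<notin> cspan D \<Longrightarrow> A x \<in> cspan (insert x D)" by blast
      then show ?thesis using core_not_le_two_if_scalar_modulo_finite[OF A inf ker] by blast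
    qed
  qed
qed

theorem lemma2p3:
  fixes A :: "'a::{complex_normed_vector, banach} \<Rightarrow> 'a"
  assumes "\<not> cfinite_dim (UNIV :: 'a set)"
    and "bounded_clinear A"
    and "A \<noteq> (\<lambda>x. 0)"
  shows "rank_one A \<longleftrightarrow>
    (\<forall>T :: 'a \<Rightarrow> 'a. bounded_clinear T \<longrightarrow>
       (let K = analytic_core (\<lambda>x. T (A x) + A (T x)) in cfinite_dim K \<and> cdim K \<le> 2))"
proof
  assume "rank_one A"
  then obtain u where "range A \<subseteq> cspan {u}"
    using rank_one_iff_range_subset_cspan[OF assms(3)] by blast
  then show "\<forall>T. bounded_clinear T \<longrightarrow>
      (let K = analytic_core (\<lambda>x. T (A x) + A (T x)) in cfinite_dim K \<and> cdim K \<le> 2)"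
    using analytic_core_anticommutator_rank_one bounded_clinear_linear by blast
next
  assume "\<forall>T. bounded_clinear T \<longrightarrow>
      (let K = analytic_core (\<lambda>x. T (A x) + A (T x)) in cfinite_dim K \<and> cdim K \<le> 2)"
  then show "rank_one A"
    using core_not_le_two_if_not_rank_one[OF assms(2,1,3)] by blast
qed

end
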